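(* For every $d\in\mathbb{N}$, the minimum size $n$ of a weighted projective $2$-design $\{x_k\}_{k\in[n]}$ for $\mathbb{C}^d$ equals $\operatorname{ebr}(\mathfrak{Z}_d)$.
   Context: Write $[n]=\{1,\dots,n\}$. Let $\Pi_d^{(2)}$ denote the orthogonal projection of $\mathbb{C}^d\otimes\mathbb{C}^d$ onto its symmetric subspace $(\mathbb{C}^d)^{\otimes 2}_{\mathrm{sym}}$ (which has dimension $\binom{d+1}{2}$). Unit vectors $\{x_k\}_{k\in[n]}$ in $\mathbb{C}^d$ form a weighted projective $2$-design (of size $n$) if there are weights $w_k\ge 0$ with $\sum_{k}w_k=1$ and $\sum_{k\in[n]}w_k(x_k\otimes x_k)(x_k\otimes x_k)^*=\binom{d+1}{2}^{-1}\Pi_d^{(2)}$. A linear map $\Phi:\mathbb{C}^{d\times d}\to\mathbb{C}^{m\times m}$ is entanglement breaking if it admits a decomposition $\Phi(X)=\sum_{k\in[n]}R_kXR_k^*$ for all $X$, with $R_k\in\mathbb{C}^{m\times d}$, $\sum_k R_k^*R_k=I_d$ and $\operatorname{rank}R_k=1$ for every $k$; its entanglement breaking rank $\operatorname{ebr}(\Phi)$ is the smallest such $n$. The map $\mathfrak{Z}_d:\mathbb{C}^{d\times d}\to\mathbb{C}^{d\times d}$ is $\mathfrak{Z}_d(X)=\frac{1}{d+1}(X+\operatorname{tr}(X)\, I_d)$ (it is entanglement breaking). *)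

theory Defs
  imports Complex_Main "Jordan_Normal_Form.Matrix" "Jordan_Normal_Form.DL_Rank"
          "Jordan_Normal_Form.Schur_Decomposition"
begin

definition msum :: "nat \<Rightarrow> nat \<Rightarrow> nat \<Rightarrow> (nat \<Rightarrow> complex mat) \<Rightarrow> complex mat" where
  "msum nr nc n A = mat nr nc (\<lambda>(i,j). \<Sum>k<n. A k $$ (i,j))"

definition mtrace :: "complex mat \<Rightarrow> complex" where
  "mtrace X = (\<Sum>i<dim_row X. X $$ (i,i))"

definition vnorm2 :: "complex vec \<Rightarrow> real" where
  "vnorm2 x = (\<Sum>i<dim_vec x. (cmod (x $ i))\<^sup>2)"

(* Kronecker (tensor) product of vectors: C^a \<otimes> C^b = C^(a*b), index (i,j) \<mapsto> i*b + j *)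
definition tensor_vec :: "complex vec \<Rightarrow> complex vec \<Rightarrow> complex vec" where
  "tensor_vec x y = vec (dim_vec x * dim_vec y)
     (\<lambda>p. x $ (p div dim_vec y) * y $ (p mod dim_vec y))"

definition outer :: "complex vec \<Rightarrow> complex mat" where
  "outer v = mat (dim_vec v) (dim_vec v) (\<lambda>(i,j). v $ i * cnj (v $ j))"

(* Swap (flip) operator on C^d \<otimes> C^d: e_i \<otimes> e_j \<mapsto> e_j \<otimes> e_i *)
definition swap_op :: "nat \<Rightarrow> complex mat" where
  "swap_op d = mat (d*d) (d*d)
     (\<lambda>(p,q). if p div d = q mod d \<and> p mod d = q div d then 1 else 0)"

definition sym_proj :: "nat \<Rightarrow> complex mat" where
  "sym_proj d = (1/2 :: complex) \<cdot>\<^sub>m (1\<^sub>m (d*d) + swap_op d)"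

definition weighted_proj_2design :: "nat \<Rightarrow> nat \<Rightarrow> (nat \<Rightarrow> complex vec) \<Rightarrow> bool" where
  "weighted_proj_2design d n x \<longleftrightarrow>
     (\<forall>k<n. x k \<in> carrier_vec d \<and> vnorm2 (x k) = 1) \<and>
     (\<exists>w :: nat \<Rightarrow> real. (\<forall>k<n. w k \<ge> 0) \<and> (\<Sum>k<n. w k) = 1 \<and>
        msum (d*d) (d*d) n (\<lambda>k. complex_of_real (w k) \<cdot>\<^sub>m outer (tensor_vec (x k) (x k)))
        = complex_of_real (1 / real ((d+1) choose 2)) \<cdot>\<^sub>m sym_proj d)"

(* Entanglement-breaking (Kraus rank-one) decomposition of size n of \<Phi> : C^{dxd} \<rightarrow> C^{mxm} *)
definition eb_decomp :: "nat \<Rightarrow> nat \<Rightarrow> (complex mat \<Rightarrow> complex mat) \<Rightarrow> nat \<Rightarrow> (nat \<Rightarrow> complex mat) \<Rightarrow> bool" where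
  "eb_decomp d m \<Phi> n R \<longleftrightarrow>
     (\<forall>k<n. R k \<in> carrier_mat m d \<and> vec_space.rank m (R k) = 1) \<and>
     msum d d n (\<lambda>k. mat_adjoint (R k) * R k) = 1\<^sub>m d \<and>
     (\<forall>X \<in> carrier_mat d d. \<Phi> X = msum m m n (\<lambda>k. R k * X * mat_adjoint (R k)))"

definition entanglement_breaking :: "nat \<Rightarrow> nat \<Rightarrow> (complex mat \<Rightarrow> complex mat) \<Rightarrow> bool" where
  "entanglement_breaking d m \<Phi> \<longleftrightarrow> (\<exists>n R. eb_decomp d m \<Phi> n R)"

definition ebr :: "nat \<Rightarrow> nat \<Rightarrow> (complex mat \<Rightarrow> complex mat) \<Rightarrow> nat" where
  "ebr d m \<Phi> = (LEAST n. \<exists>R. eb_decomp d m \<Phi> n R)"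

definition Zmap :: "nat \<Rightarrow> complex mat \<Rightarrow> complex mat" where
  "Zmap d X = (1 / of_nat (d+1) :: complex) \<cdot>\<^sub>m (X + mtrace X \<cdot>\<^sub>m 1\<^sub>m d)"

end

theory Submission
  imports Defs
begin

(* Expanding Z_d(X) = \<Sum>k R_k X R_k^* entrywise shows that a family of Kraus operators R_k
   represents Z_d iff its moments \<Sum>k R_k(a,c) conj (R_k(b,e)) equal
   (\<delta>_ac \<delta>_be + \<delta>_ab \<delta>_ce)/(d+1); these moments already force \<Sum>k R_k^* R_k = I.
   A rank-one Kraus operator u g^T of Z_d is a multiple \<kappa> x x^* of a projection, since the
   moments give \<Sum>k |u_a conj (g_e) - u_e conj (g_a)|^2 = 0.  For Kraus operators \<kappa>_k x_k x_k^*
   the moment identity is precisely the 2-design identity with weights |\<kappa>_k|^2/d.  Hence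
   every rank-one Kraus decomposition of Z_d of size n yields a weighted 2-design of size n,
   and every weighted 2-design of size n yields one of size at most n. *)

lemma dim_mat_adjoint [simp]:
  "dim_row (mat_adjoint A) = dim_col A" "dim_col (mat_adjoint A) = dim_row A"
  unfolding mat_adjoint_def by (simp_all add: mat_of_rows_def)

lemma index_mat_adjoint:
  "i < dim_col A \<Longrightarrow> j < dim_row A \<Longrightarrow> mat_adjoint A $$ (i,j) = cnj (A $$ (j,i))"
  unfolding mat_adjoint_def by (simp add: mat_of_rows_def)

lemma dim_msum [simp]: "dim_row (msum nr nc n A) = nr" "dim_col (msum nr nc n A) = nc"
  unfolding msum_def by simp_all

lemma index_msum: "i < nr \<Longrightarrow> j < nc \<Longrightarrow> msum nr nc n A $$ (i,j) = (\<Sum>k<n. A k $$ (i,j))"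
  unfolding msum_def by simp

lemma dim_outer [simp]: "dim_row (outer v) = dim_vec v" "dim_col (outer v) = dim_vec v"
  unfolding outer_def by simp_all

lemma index_outer: "i < dim_vec v \<Longrightarrow> j < dim_vec v \<Longrightarrow> outer v $$ (i,j) = v $ i * cnj (v $ j)"
  unfolding outer_def by simp

lemma index_mult_mult_adjoint:
  assumes R: "R \<in> carrier_mat m d" and X: "X \<in> carrier_mat d d" and "a < m" "b < m"
  shows "(R * X * mat_adjoint R) $$ (a,b) = (\<Sum>i<d. \<Sum>j<d. R $$ (a,i) * X $$ (i,j) * cnj (R $$ (b,j)))"
proof -
  have "(R * X * mat_adjoint R) $$ (a,b) = (\<Sum>j<d. (\<Sum>i<d. R $$ (a,i) * X $$ (i,j)) * cnj (R $$ (b,j)))"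
    using assms by (simp add: scalar_prod_def lessThan_atLeast0 index_mat_adjoint)
  also have "\<dots> = (\<Sum>j<d. \<Sum>i<d. R $$ (a,i) * X $$ (i,j) * cnj (R $$ (b,j)))"
    by (simp add: sum_distrib_right)
  also have "\<dots> = (\<Sum>i<d. \<Sum>j<d. R $$ (a,i) * X $$ (i,j) * cnj (R $$ (b,j)))"
    by (rule sum.swap)
  finally show ?thesis .
qed

lemma index_adjoint_mult:
  assumes "R \<in> carrier_mat m d" "c < d" "e < d"
  shows "(mat_adjoint R * R) $$ (c,e) = (\<Sum>a<m. R $$ (a,e) * cnj (R $$ (a,c)))"
  using assms by (simp add: scalar_prod_def lessThan_atLeast0 index_mat_adjoint mult.commute)

lemma index_Zmap:
  assumes "X \<in> carrier_mat d d" "a < d" "b < d"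
  shows "Zmap d X $$ (a,b) = (X $$ (a,b) + (if a = b then (\<Sum>i<d. X $$ (i,i)) else 0)) / of_nat (d+1)"
  using assms by (simp add: Zmap_def mtrace_def)

lemma sum_lessThan_delta2:
  fixes c e m n :: nat
  assumes "c < m" "e < n"
  shows "(\<Sum>i<m. \<Sum>j<n. if i = c \<and> j = e then f i j else 0) = f c e"
proof -
  have "(\<Sum>j<n. if i = c \<and> j = e then f i j else 0) = (if i = c then f c e else 0)" for i
    using assms by (cases "i = c") simp_all
  then show ?thesis using assms by simp
qed

lemma vnorm2_eq_1_imp_nonzero_entry:
  assumes "x \<in> carrier_vec d" "vnorm2 x = 1"
  obtains i where "i < d" "x $ i \<noteq> 0"
  using assms unfolding vnorm2_def by (metis (no_types, lifting) carrier_vecD norm_zero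
      sum.neutral zero_neq_one zero_power2 lessThan_iff)

context vec_space
begin

lemma rank_ge_1_if_entry_nonzero:
  assumes A: "A \<in> carrier_mat n nc" and i: "i < n" and j: "j < nc" and nz: "A $$ (i,j) \<noteq> 0"
  shows "rank A \<ge> 1"
proof -
  have cj: "col A j \<in> carrier_vec n" using A by auto
  have li: "lin_indpt {col A j}"
  proof (rule finite_lin_indpt2)
    fix a assume "lincomb a {col A j} = 0\<^sub>v n"
    then have "a (col A j) * col A j $ i = 0"
      using lincomb_index[OF i, of "{col A j}" a] cj i by simp
    then show "\<forall>v\<in>{col A j}. a v = 0" using A i j nz by simp
  qed (use cj in simp_all)
  have "{col A j} \<subseteq> set (cols A)" using A j by (auto simp: cols_def)
  from rank_ge_card_indpt[OF A this li] show ?thesis by simp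
qed

lemma rank_ge_2_if_minor_nonzero:
  assumes A: "A \<in> carrier_mat n nc" and a: "a < n" and b: "b < n" and c: "c < nc" and e: "e < nc"
    and nz: "A $$ (a,c) * A $$ (b,e) \<noteq> A $$ (a,e) * A $$ (b,c)"
  shows "rank A \<ge> 2"
proof -
  let ?u = "col A c" and ?v = "col A e"
  have cu: "?u \<in> carrier_vec n" "?v \<in> carrier_vec n" using A by auto
  have ent: "?u $ a = A $$ (a,c)" "?u $ b = A $$ (b,c)" "?v $ a = A $$ (a,e)" "?v $ b = A $$ (b,e)"
    using A a b c e by auto
  have neq: "?u \<noteq> ?v" using nz ent by (metis mult.commute)
  have li: "lin_indpt {?u, ?v}"
  proof (rule finite_lin_indpt2)
    fix f assume lc: "lincomb f {?u, ?v} = 0\<^sub>v n"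
    have "lincomb f {?u, ?v} $ i = f ?u * ?u $ i + f ?v * ?v $ i" if "i < n" for i
      using lincomb_index[OF that, of "{?u, ?v}" f] cu neq by simp
    then have e1: "f ?u * A $$ (a,c) + f ?v * A $$ (a,e) = 0"
      and e2: "f ?u * A $$ (b,c) + f ?v * A $$ (b,e) = 0"
      using lc a b ent by (metis index_zero_vec(1))+
    have "f ?u * (A $$ (a,c) * A $$ (b,e) - A $$ (a,e) * A $$ (b,c)) =
      (f ?u * A $$ (a,c) + f ?v * A $$ (a,e)) * A $$ (b,e) - (f ?u * A $$ (b,c) + f ?v * A $$ (b,e)) * A $$ (a,e)"
      by (simp add: algebra_simps)
    then have "f ?u = 0" using e1 e2 nz by simp
    have "f ?v * (A $$ (a,c) * A $$ (b,e) - A $$ (a,e) * A $$ (b,c)) =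
      (f ?u * A $$ (b,c) + f ?v * A $$ (b,e)) * A $$ (a,c) - (f ?u * A $$ (a,c) + f ?v * A $$ (a,e)) * A $$ (b,c)"
      by (simp add: algebra_simps)
    then have "f ?v = 0" using e1 e2 nz by simp
    with \<open>f ?u = 0\<close> show "\<forall>w\<in>{?u, ?v}. f w = 0" by simp
  qed (use cu in simp_all)
  have "{?u, ?v} \<subseteq> set (cols A)" using A c e by (auto simp: cols_def)
  from rank_ge_card_indpt[OF A this li] show ?thesis using neq by simp
qed

lemma rank_eq_1_if_product_entries:
  assumes A: "A \<in> carrier_mat n nc" and prod: "\<And>r c. r < n \<Longrightarrow> c < nc \<Longrightarrow> A $$ (r,c) = f r * g c"
    and "i < n" "j < nc" "A $$ (i,j) \<noteq> 0"
  shows "rank A = 1"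
  using rank_le_1_product_entries[OF A, of f g] rank_ge_1_if_entry_nonzero[OF A] A prod assms(3-5)
  by fastforce

lemma rank_eq_1_imp_product_entries:
  assumes A: "A \<in> carrier_mat n nc" and r: "rank A = 1"
  obtains f g i where "i < n" "f i \<noteq> 0" "\<And>r c. r < n \<Longrightarrow> c < nc \<Longrightarrow> A $$ (r,c) = f r * g c"
proof -
  obtain a0 c0 where a0: "a0 < n" and c0: "c0 < nc" and nz: "A $$ (a0,c0) \<noteq> 0"
  proof (rule ccontr)
    assume "\<not> thesis"
    then have "A = 0\<^sub>m n nc" using A that by (intro eq_matI) auto
    then show False using r rank_0I by simp
  qed
  have minor: "A $$ (a,c) * A $$ (a0,c0) = A $$ (a,c0) * A $$ (a0,c)" if "a < n" "c < nc" for a c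
    using rank_ge_2_if_minor_nonzero[OF A that(1) a0 that(2) c0] r by fastforce
  show thesis
  proof (rule that[of a0 "\<lambda>a. A $$ (a,c0)" "\<lambda>c. A $$ (a0,c) / A $$ (a0,c0)"])
    fix a c assume "a < n" "c < nc"
    from minor[OF this] nz show "A $$ (a,c) = A $$ (a,c0) * (A $$ (a0,c) / A $$ (a0,c0))"
      by (simp add: field_simps ac_simps)
  qed (use a0 nz in simp_all)
qed

end

section \<open>Kraus operators of Z_d\<close>

(* The Choi-matrix entries of X \<mapsto> \<Sum>k R_k X R_k^*, compared with those of Z_d. *)
definition Zmap_kraus_moments :: "nat \<Rightarrow> nat \<Rightarrow> (nat \<Rightarrow> complex mat) \<Rightarrow> bool" where
  "Zmap_kraus_moments d n R \<longleftrightarrow> (\<forall>a<d. \<forall>b<d. \<forall>c<d. \<forall>e<d.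
     (\<Sum>k<n. R k $$ (a,c) * cnj (R k $$ (b,e))) =
     ((if a = c \<and> b = e then 1 else 0) + (if a = b \<and> c = e then 1 else 0)) / of_nat (d+1))"

lemma Zmap_kraus_moments_if_Zmap_eq:
  assumes R: "\<And>k. k < n \<Longrightarrow> R k \<in> carrier_mat d d"
    and Z: "\<forall>X \<in> carrier_mat d d. Zmap d X = msum d d n (\<lambda>k. R k * X * mat_adjoint (R k))"
  shows "Zmap_kraus_moments d n R"
  unfolding Zmap_kraus_moments_def
proof (intro allI impI)
  fix a b c e assume a: "a < d" and b: "b < d" and c: "c < d" and e: "e < d"
  define X where "X = mat d d (\<lambda>(i,j). if i = c \<and> j = e then 1 else (0::complex))"
  have X: "X \<in> carrier_mat d d" unfolding X_def by simp
  have unit: "(\<Sum>i<d. \<Sum>j<d. R k $$ (a,i) * X $$ (i,j) * cnj (R k $$ (b,j))) = R k $$ (a,c) * cnj (R k $$ (b,e))"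
    for k
  proof -
    have "R k $$ (a,i) * X $$ (i,j) * cnj (R k $$ (b,j)) =
        (if i = c \<and> j = e then R k $$ (a,i) * cnj (R k $$ (b,j)) else 0)" if "i < d" "j < d" for i j
      using that by (simp add: X_def)
    then show ?thesis using c e by (simp add: sum_lessThan_delta2)
  qed
  have "(\<Sum>k<n. R k $$ (a,c) * cnj (R k $$ (b,e))) = msum d d n (\<lambda>k. R k * X * mat_adjoint (R k)) $$ (a,b)"
    using a b by (simp add: index_msum index_mult_mult_adjoint[OF R X] unit)
  also have "\<dots> = Zmap d X $$ (a,b)" using Z X by simp
  also have "\<dots> = ((if a = c \<and> b = e then 1 else 0) + (if a = b \<and> c = e then 1 else 0)) / of_nat (d+1)"
    unfolding index_Zmap[OF X a b] using a b c e by (simp add: X_def sum.delta)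
  finally show "(\<Sum>k<n. R k $$ (a,c) * cnj (R k $$ (b,e))) =
     ((if a = c \<and> b = e then 1 else 0) + (if a = b \<and> c = e then 1 else 0)) / of_nat (d+1)" .
qed

lemma Zmap_eq_if_Zmap_kraus_moments:
  assumes R: "\<And>k. k < n \<Longrightarrow> R k \<in> carrier_mat d d" and M: "Zmap_kraus_moments d n R"
    and X: "X \<in> carrier_mat d d"
  shows "Zmap d X = msum d d n (\<lambda>k. R k * X * mat_adjoint (R k))"
proof (rule eq_matI)
  fix a b assume "a < dim_row (msum d d n (\<lambda>k. R k * X * mat_adjoint (R k)))"
    and "b < dim_col (msum d d n (\<lambda>k. R k * X * mat_adjoint (R k)))"
  then have a: "a < d" and b: "b < d" by auto
  have "msum d d n (\<lambda>k. R k * X * mat_adjoint (R k)) $$ (a,b) =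
      (\<Sum>i<d. \<Sum>j<d. X $$ (i,j) * (\<Sum>k<n. R k $$ (a,i) * cnj (R k $$ (b,j))))"
  proof -
    have "msum d d n (\<lambda>k. R k * X * mat_adjoint (R k)) $$ (a,b) =
        (\<Sum>k<n. \<Sum>i<d. \<Sum>j<d. R k $$ (a,i) * X $$ (i,j) * cnj (R k $$ (b,j)))"
      using a b by (simp add: index_msum index_mult_mult_adjoint[OF R X])
    also have "\<dots> = (\<Sum>i<d. \<Sum>j<d. \<Sum>k<n. R k $$ (a,i) * X $$ (i,j) * cnj (R k $$ (b,j)))"
      by (simp add: sum.swap[of _ "{..<n}"])
    finally show ?thesis by (simp add: sum_distrib_left ac_simps)
  qed
  also have "\<dots> = (\<Sum>i<d. \<Sum>j<d. ((if i = a \<and> j = b then X $$ (i,j) else 0)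
      + (if j = i then (if a = b then X $$ (i,j) else 0) else 0)) / of_nat (d+1))"
    using M a b unfolding Zmap_kraus_moments_def by (intro sum.cong refl) auto
  also have "\<dots> = Zmap d X $$ (a,b)"
    using a b by (simp add: index_Zmap[OF X] sum.distrib sum_divide_distrib[symmetric]
        add_divide_distrib[symmetric] sum_lessThan_delta2 sum.delta')
  finally show "Zmap d X $$ (a,b) = msum d d n (\<lambda>k. R k * X * mat_adjoint (R k)) $$ (a,b)" ..
qed (use X in \<open>simp_all add: Zmap_def\<close>)

lemma trace_preserving_if_Zmap_kraus_moments:
  assumes R: "\<And>k. k < n \<Longrightarrow> R k \<in> carrier_mat d d" and M: "Zmap_kraus_moments d n R"
  shows "msum d d n (\<lambda>k. mat_adjoint (R k) * R k) = 1\<^sub>m d"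
proof (rule eq_matI)
  fix c e assume "c < dim_row (1\<^sub>m d)" "e < dim_col (1\<^sub>m d)"
  then have c: "c < d" and e: "e < d" by auto
  have "msum d d n (\<lambda>k. mat_adjoint (R k) * R k) $$ (c,e) = (\<Sum>a<d. \<Sum>k<n. R k $$ (a,e) * cnj (R k $$ (a,c)))"
    using c e by (simp add: index_msum index_adjoint_mult[OF R] sum.swap[of _ "{..<n}"])
  also have "\<dots> = (\<Sum>a<d. ((if a = e \<and> a = c then 1 else 0) + (if c = e then 1 else 0)) / of_nat (d+1))"
    using M c e unfolding Zmap_kraus_moments_def by (intro sum.cong refl) auto
  also have "\<dots> = (if c = e then 1 else 0)"
  proof -
    have "(of_nat (d+1) :: complex) \<noteq> 0" by (simp only: of_nat_eq_0_iff)
    then show ?thesis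
      using e by (simp add: sum_divide_distrib[symmetric] sum.distrib sum.delta add.commute)
  qed
  finally show "msum d d n (\<lambda>k. mat_adjoint (R k) * R k) $$ (c,e) = 1\<^sub>m d $$ (c,e)"
    using c e by simp
qed auto

lemma eb_decomp_Zmap_iff:
  "eb_decomp d d (Zmap d) n R \<longleftrightarrow>
     (\<forall>k<n. R k \<in> carrier_mat d d \<and> vec_space.rank d (R k) = 1) \<and> Zmap_kraus_moments d n R"
proof -
  have "msum d d n (\<lambda>k. mat_adjoint (R k) * R k) = 1\<^sub>m d \<and>
      (\<forall>X \<in> carrier_mat d d. Zmap d X = msum d d n (\<lambda>k. R k * X * mat_adjoint (R k)))
      \<longleftrightarrow> Zmap_kraus_moments d n R" if "\<And>k. k < n \<Longrightarrow> R k \<in> carrier_mat d d"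
    using that Zmap_kraus_moments_if_Zmap_eq Zmap_eq_if_Zmap_kraus_moments
      trace_preserving_if_Zmap_kraus_moments by blast
  then show ?thesis unfolding eb_decomp_def by blast
qed

section \<open>Weighted projective 2-designs\<close>

lemma dim_tensor_vec [simp]: "dim_vec (tensor_vec x y) = dim_vec x * dim_vec y"
  unfolding tensor_vec_def by simp

lemma index_tensor_vec:
  "p < dim_vec x * dim_vec y \<Longrightarrow> tensor_vec x y $ p = x $ (p div dim_vec y) * y $ (p mod dim_vec y)"
  unfolding tensor_vec_def by simp

lemma inverse_Suc_choose_two: "complex_of_real (1 / real ((d+1) choose 2)) = 2 / of_nat (d * (d+1))"
proof -
  have "even ((d+1) * d)" by simp
  then have "2 * ((d+1) choose 2) = d * (d+1)" unfolding choose_two by (simp add: mult.commute)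
  then have "of_nat (d * (d+1)) = (2 * of_nat ((d+1) choose 2) :: complex)"
    by (metis of_nat_mult of_nat_numeral)
  then show ?thesis by (simp add: of_real_divide)
qed

(* The 2-design identity read at the entry ((a,b),(c,e)) of (C^d \<otimes> C^d) \<times> (C^d \<otimes> C^d). *)
definition design_moments :: "nat \<Rightarrow> nat \<Rightarrow> (nat \<Rightarrow> complex vec) \<Rightarrow> (nat \<Rightarrow> real) \<Rightarrow> bool" where
  "design_moments d n x w \<longleftrightarrow> (\<forall>a<d. \<forall>b<d. \<forall>c<d. \<forall>e<d.
     (\<Sum>k<n. complex_of_real (w k) * (x k $ a * x k $ b * cnj (x k $ c * x k $ e))) =
     ((if a = c \<and> b = e then 1 else 0) + (if a = e \<and> b = c then 1 else 0)) / of_nat (d * (d+1)))"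

lemma index_weighted_tensor_sum:
  assumes x: "\<And>k. k < n \<Longrightarrow> x k \<in> carrier_vec d" and p: "p < d * d" and q: "q < d * d"
  shows "msum (d*d) (d*d) n (\<lambda>k. complex_of_real (w k) \<cdot>\<^sub>m outer (tensor_vec (x k) (x k))) $$ (p,q) =
    (\<Sum>k<n. complex_of_real (w k) *
       (x k $ (p div d) * x k $ (p mod d) * cnj (x k $ (q div d) * x k $ (q mod d))))"
proof -
  have "(complex_of_real (w k) \<cdot>\<^sub>m outer (tensor_vec (x k) (x k))) $$ (p,q) =
      complex_of_real (w k) * (x k $ (p div d) * x k $ (p mod d) * cnj (x k $ (q div d) * x k $ (q mod d)))"
    if "k < n" for k
  proof -
    have "dim_vec (x k) = d" using x[OF that] by simp
    then show ?thesis using p q by (simp add: index_outer index_tensor_vec)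
  qed
  then show ?thesis using p q by (simp add: index_msum)
qed

lemma index_scaled_sym_proj:
  assumes p: "p < d * d" and q: "q < d * d"
  shows "(complex_of_real (1 / real ((d+1) choose 2)) \<cdot>\<^sub>m sym_proj d) $$ (p,q) =
    ((if p div d = q div d \<and> p mod d = q mod d then 1 else 0)
     + (if p div d = q mod d \<and> p mod d = q div d then 1 else 0)) / of_nat (d * (d+1))"
proof -
  have pq: "(p = q) = (p div d = q div d \<and> p mod d = q mod d)" by (metis div_mult_mod_eq)
  have "(complex_of_real (1 / real ((d+1) choose 2)) \<cdot>\<^sub>m sym_proj d) $$ (p,q) =
      complex_of_real (1 / real ((d+1) choose 2)) * (1/2) *
      ((if p = q then 1 else 0) + (if p div d = q mod d \<and> p mod d = q div d then 1 else 0))"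
    using p q by (simp add: sym_proj_def swap_op_def)
  also have "\<dots> = 2 / of_nat (d * (d+1)) * (1/2) *
      ((if p div d = q div d \<and> p mod d = q mod d then 1 else 0)
       + (if p div d = q mod d \<and> p mod d = q div d then 1 else 0))"
    by (simp only: inverse_Suc_choose_two pq)
  also have "\<dots> = ((if p div d = q div d \<and> p mod d = q mod d then 1 else 0)
     + (if p div d = q mod d \<and> p mod d = q div d then 1 else 0)) / of_nat (d * (d+1))"
    by (simp only: mult.commute[of _ "1/2"] mult.assoc[symmetric]) simp
  finally show ?thesis .
qed

lemma pair_index_bounds:
  fixes a b d :: nat
  assumes "a < d" "b < d"
  shows "a * d + b < d * d" "(a * d + b) div d = a" "(a * d + b) mod d = b"
proof -
  have "a * d + b < (a + 1) * d" using assms by simp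
  also have "\<dots> \<le> d * d" using assms by (intro mult_le_mono1) simp
  finally show "a * d + b < d * d" .
  show "(a * d + b) div d = a" "(a * d + b) mod d = b" using assms by simp_all
qed

lemma weighted_proj_2design_iff_moments:
  "weighted_proj_2design d n x \<longleftrightarrow> (\<forall>k<n. x k \<in> carrier_vec d \<and> vnorm2 (x k) = 1) \<and>
     (\<exists>w. (\<forall>k<n. w k \<ge> 0) \<and> (\<Sum>k<n. w k) = 1 \<and> design_moments d n x w)"
proof -
  let ?L = "\<lambda>w. msum (d*d) (d*d) n (\<lambda>k. complex_of_real (w k) \<cdot>\<^sub>m outer (tensor_vec (x k) (x k)))"
  let ?R = "complex_of_real (1 / real ((d+1) choose 2)) \<cdot>\<^sub>m sym_proj d"
  have "?L w = ?R \<longleftrightarrow> design_moments d n x w" if x: "\<And>k. k < n \<Longrightarrow> x k \<in> carrier_vec d" for w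
  proof
    assume eq: "?L w = ?R"
    show "design_moments d n x w" unfolding design_moments_def
    proof (intro allI impI)
      fix a b c e assume "a < d" "b < d" "c < d" "e < d"
      note ab = pair_index_bounds[OF \<open>a < d\<close> \<open>b < d\<close>] and ce = pair_index_bounds[OF \<open>c < d\<close> \<open>e < d\<close>]
      have "(\<Sum>k<n. complex_of_real (w k) * (x k $ a * x k $ b * cnj (x k $ c * x k $ e))) =
          ?L w $$ (a*d+b, c*d+e)"
        using index_weighted_tensor_sum[OF x ab(1) ce(1)] ab ce by simp
      also have "\<dots> = ?R $$ (a*d+b, c*d+e)" using eq by simp
      also have "\<dots> = ((if a = c \<and> b = e then 1 else 0) + (if a = e \<and> b = c then 1 else 0)) / of_nat (d * (d+1))"
        using index_scaled_sym_proj[OF ab(1) ce(1)] ab ce by simp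
      finally show "(\<Sum>k<n. complex_of_real (w k) * (x k $ a * x k $ b * cnj (x k $ c * x k $ e))) =
          ((if a = c \<and> b = e then 1 else 0) + (if a = e \<and> b = c then 1 else 0)) / of_nat (d * (d+1))" .
    qed
  next
    assume D: "design_moments d n x w"
    show "?L w = ?R"
    proof (rule eq_matI)
      fix p q assume "p < dim_row ?R" "q < dim_col ?R"
      then have p: "p < d * d" and q: "q < d * d" by (simp_all add: sym_proj_def swap_op_def)
      moreover have "0 < d" using p by (cases d) auto
      ultimately have "p div d < d" "p mod d < d" "q div d < d" "q mod d < d"
        by (auto simp: less_mult_imp_div_less)
      note moment = D[unfolded design_moments_def, rule_format, OF this]
      show "?L w $$ (p,q) = ?R $$ (p,q)"
        by (rule trans[OF index_weighted_tensor_sum[OF x p q]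
              trans[OF moment index_scaled_sym_proj[OF p q, symmetric]]])
    qed (simp_all add: sym_proj_def swap_op_def)
  qed
  then show ?thesis unfolding weighted_proj_2design_def by blast
qed

lemma design_moments_weight_sum:
  assumes d: "d \<ge> 1" and x: "\<And>k. k < n \<Longrightarrow> x k \<in> carrier_vec d \<and> vnorm2 (x k) = 1"
    and D: "design_moments d n x w"
  shows "(\<Sum>k<n. w k) = 1"
proof -
  let ?g = "\<lambda>k a b. (cmod (x k $ a))\<^sup>2 * (cmod (x k $ b))\<^sup>2"
  have "(\<Sum>a<d. \<Sum>b<d. ?g k a b) = 1" if "k < n" for k
  proof -
    have "dim_vec (x k) = d" "vnorm2 (x k) = 1" using x[OF that] by simp_all
    then show ?thesis unfolding vnorm2_def by (simp add: sum_product[symmetric])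
  qed
  then have "(\<Sum>k<n. w k) = (\<Sum>k<n. \<Sum>a<d. \<Sum>b<d. w k * ?g k a b)"
    by (simp add: sum_distrib_left[symmetric])
  also have "\<dots> = (\<Sum>a<d. \<Sum>b<d. \<Sum>k<n. w k * ?g k a b)"
    by (simp add: sum.swap[of _ "{..<n}"])
  finally have real_eq: "(\<Sum>k<n. w k) = (\<Sum>a<d. \<Sum>b<d. \<Sum>k<n. w k * ?g k a b)" .
  have sq: "x k $ a * x k $ b * cnj (x k $ a * x k $ b) = complex_of_real (?g k a b)" for k a b
    unfolding complex_norm_square[symmetric] by (simp add: norm_mult power_mult_distrib)
  have "complex_of_real (\<Sum>k<n. w k) =
      (\<Sum>a<d. \<Sum>b<d. \<Sum>k<n. complex_of_real (w k) * (x k $ a * x k $ b * cnj (x k $ a * x k $ b)))"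
    unfolding real_eq sq by simp
  also have "\<dots> = (\<Sum>a<d. \<Sum>b<d. (1 + (if a = b then 1 else 0)) / of_nat (d * (d+1)))"
    using D unfolding design_moments_def by (intro sum.cong refl) auto
  also have "\<dots> = 1"
  proof -
    have "(of_nat (d * (d+1)) :: complex) \<noteq> 0" using d by (simp only: of_nat_eq_0_iff) simp
    then show ?thesis by (simp add: sum.distrib sum_divide_distrib[symmetric] algebra_simps)
  qed
  finally show ?thesis by (metis of_real_eq_1_iff)
qed

lemma design_moments_restrict_support:
  assumes h: "bij_betw h {..<m} S" and S: "S \<subseteq> {..<n}" and w0: "\<And>k. k < n \<Longrightarrow> k \<notin> S \<Longrightarrow> w k = 0"
    and D: "design_moments d n x w"
  shows "design_moments d m (\<lambda>j. x (h j)) (\<lambda>j. w (h j))"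
proof -
  have reindex: "(\<Sum>j<m. F (h j)) = (\<Sum>k<n. F k)" if "\<And>k. k < n \<Longrightarrow> k \<notin> S \<Longrightarrow> F k = 0" for F
  proof -
    have "(\<Sum>j<m. F (h j)) = sum F S" by (rule sum.reindex_bij_betw[OF h])
    also have "\<dots> = (\<Sum>k<n. F k)" by (rule sum.mono_neutral_left) (use S that in auto)
    finally show ?thesis .
  qed
  show ?thesis
    using D unfolding design_moments_def by (subst reindex) (simp_all add: w0)
qed

section \<open>Rank-one Kraus operators of Z_d\<close>

lemma Zmap_kraus_moments_scaled_outer_iff:
  assumes x: "\<And>k. k < n \<Longrightarrow> x k \<in> carrier_vec d"
    and R: "\<And>k. k < n \<Longrightarrow> R k = \<kappa> k \<cdot>\<^sub>m outer (x k)"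
    and w: "\<And>k. k < n \<Longrightarrow> w k = (cmod (\<kappa> k))\<^sup>2 / real d"
  shows "Zmap_kraus_moments d n R \<longleftrightarrow> design_moments d n x w"
proof -
  define K where "K a b c e \<longleftrightarrow> (\<Sum>k<n. R k $$ (a,c) * cnj (R k $$ (b,e))) =
      ((if a = c \<and> b = e then 1 else 0) + (if a = b \<and> c = e then 1 else 0)) / of_nat (d+1)" for a b c e
  define D where "D a b c e \<longleftrightarrow>
      (\<Sum>k<n. complex_of_real (w k) * (x k $ a * x k $ b * cnj (x k $ c * x k $ e))) =
      ((if a = c \<and> b = e then 1 else 0) + (if a = e \<and> b = c then 1 else 0)) / of_nat (d * (d+1))"
    for a b c e
  have KD: "K a b c e \<longleftrightarrow> D a e c b" if "a < d" "b < d" "c < d" "e < d" for a b c e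
  proof -
    have d: "(of_nat d :: complex) \<noteq> 0" using that by simp
    have "R k $$ (a,c) * cnj (R k $$ (b,e)) =
        of_nat d * (complex_of_real (w k) * (x k $ a * x k $ e * cnj (x k $ c * x k $ b)))" if "k < n" for k
      using that x[OF that] \<open>a < d\<close> \<open>b < d\<close> \<open>c < d\<close> \<open>e < d\<close> d
      by (simp add: R w index_outer complex_norm_square[symmetric] of_real_divide ac_simps)
    then have "(\<Sum>k<n. R k $$ (a,c) * cnj (R k $$ (b,e))) =
        of_nat d * (\<Sum>k<n. complex_of_real (w k) * (x k $ a * x k $ e * cnj (x k $ c * x k $ b)))"
      by (simp add: sum_distrib_left)
    moreover have "((if a = c \<and> b = e then 1 else 0) + (if a = b \<and> c = e then 1 else 0)) / of_nat (d+1) =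
        (of_nat d :: complex) * (((if a = c \<and> e = b then 1 else 0) + (if a = b \<and> e = c then 1 else 0)) / of_nat (d * (d+1)))"
    proof -
      have "of_nat d * (t / of_nat (d * (d+1))) = t / of_nat (d+1)" for t :: complex
        unfolding times_divide_eq_right of_nat_mult mult_divide_mult_cancel_left[OF d] ..
      moreover have "(a = c \<and> b = e) = (a = c \<and> e = b)" "(a = b \<and> c = e) = (a = b \<and> e = c)" by auto
      ultimately show ?thesis by (simp only:)
    qed
    ultimately show ?thesis unfolding K_def D_def using d by (simp only: mult_cancel_left simp_thms)
  qed
  have "Zmap_kraus_moments d n R \<longleftrightarrow> (\<forall>a<d. \<forall>b<d. \<forall>c<d. \<forall>e<d. K a b c e)"
    by (simp only: Zmap_kraus_moments_def K_def)
  also have "\<dots> \<longleftrightarrow> (\<forall>a<d. \<forall>b<d. \<forall>c<d. \<forall>e<d. D a e c b)"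
    by (simp add: KD)
  also have "\<dots> \<longleftrightarrow> design_moments d n x w"
    unfolding design_moments_def D_def[symmetric] by blast
  finally show ?thesis .
qed

lemma rank_scaled_outer:
  assumes x: "x \<in> carrier_vec d" "vnorm2 x = 1" and "\<kappa> \<noteq> 0"
  shows "vec_space.rank d (\<kappa> \<cdot>\<^sub>m outer x) = 1"
proof -
  obtain i where "i < d" "x $ i \<noteq> 0" using vnorm2_eq_1_imp_nonzero_entry[OF x] .
  then show ?thesis
    using x \<open>\<kappa> \<noteq> 0\<close>
    by (intro vec_space.rank_eq_1_if_product_entries[where f = "\<lambda>a. \<kappa> * x $ a" and g = "\<lambda>c. cnj (x $ c)"])
      (auto simp: index_outer)
qed

(* Expanding \<Sum>k |D k|^2 with D k = u_a conj (g_e) - u_e conj (g_a) gives four moments that cancel. *)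
lemma Zmap_kraus_moments_product_hermitian:
  assumes M: "Zmap_kraus_moments d n R"
    and prod: "\<And>k a c. k < n \<Longrightarrow> a < d \<Longrightarrow> c < d \<Longrightarrow> R k $$ (a,c) = u k a * g k c"
    and k: "k < n" and a: "a < d" and e: "e < d"
  shows "u k a * cnj (g k e) = u k e * cnj (g k a)"
proof -
  define D where "D k = u k a * cnj (g k e) - u k e * cnj (g k a)" for k
  have "(\<Sum>k<n. D k * cnj (D k)) =
      (\<Sum>k<n. R k $$ (a,e) * cnj (R k $$ (a,e)) - R k $$ (a,a) * cnj (R k $$ (e,e))
        - R k $$ (e,e) * cnj (R k $$ (a,a)) + R k $$ (e,a) * cnj (R k $$ (e,a)))"
    using a e by (intro sum.cong refl) (simp add: D_def prod algebra_simps)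
  also have "\<dots> = 0"
    using M a e unfolding Zmap_kraus_moments_def
    by (simp add: sum.distrib sum_subtractf diff_divide_distrib[symmetric] add_divide_distrib[symmetric])
  finally have "(\<Sum>k<n. complex_of_real ((cmod (D k))\<^sup>2)) = 0" unfolding complex_norm_square .
  then have "(\<Sum>k<n. (cmod (D k))\<^sup>2) = 0" by (simp only: of_real_sum[symmetric] of_real_eq_0_iff)
  then have "D k = 0" using k by (subst (asm) sum_nonneg_eq_0_iff) auto
  then show ?thesis unfolding D_def by simp
qed

lemma hermitian_product_eq_scaled_outer:
  assumes R: "R \<in> carrier_mat d d" and i: "i < d" "u i \<noteq> 0"
    and prod: "\<And>a c. a < d \<Longrightarrow> c < d \<Longrightarrow> R $$ (a,c) = u a * g c"
    and herm: "\<And>a e. a < d \<Longrightarrow> e < d \<Longrightarrow> u a * cnj (g e) = u e * cnj (g a)"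
  obtains \<kappa> x where "x \<in> carrier_vec d" "vnorm2 x = 1" "R = \<kappa> \<cdot>\<^sub>m outer x"
proof -
  define N2 where "N2 = (\<Sum>a<d. (cmod (u a))\<^sup>2)"
  have "0 < (cmod (u i))\<^sup>2" using i by simp
  also have "\<dots> \<le> N2" unfolding N2_def by (rule member_le_sum) (use i in auto)
  finally have N2: "N2 > 0" .
  define N where "N = sqrt N2"
  have N: "N > 0" "N * N = N2" unfolding N_def using N2 by simp_all
  define x where "x = vec d (\<lambda>a. u a / complex_of_real N)"
  define \<kappa> where "\<kappa> = g i / cnj (u i) * complex_of_real N2"
  show thesis
  proof (rule that[of x \<kappa>])
    show x: "x \<in> carrier_vec d" unfolding x_def by simp
    have "vnorm2 x = (\<Sum>a<d. (cmod (u a))\<^sup>2 / N2)"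
      unfolding vnorm2_def x_def using N by (simp add: norm_divide power_divide power2_eq_square)
    then show "vnorm2 x = 1" using N2 by (simp add: sum_divide_distrib[symmetric] N2_def)
    have g: "g c = cnj (u c) * g i / cnj (u i)" if "c < d" for c
      using arg_cong[OF herm[OF i(1) that], of cnj] i(2) by (simp add: field_simps)
    show "R = \<kappa> \<cdot>\<^sub>m outer x"
    proof (rule eq_matI)
      fix a c assume "a < dim_row (\<kappa> \<cdot>\<^sub>m outer x)" "c < dim_col (\<kappa> \<cdot>\<^sub>m outer x)"
      then have a: "a < d" and c: "c < d" using x by auto
      have "complex_of_real N2 = complex_of_real N * cnj (complex_of_real N)"
        using N by (simp flip: of_real_mult)
      then show "R $$ (a,c) = (\<kappa> \<cdot>\<^sub>m outer x) $$ (a,c)"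
        unfolding prod[OF a c] g[OF c] \<kappa>_def using a c x N i by (simp add: index_outer x_def field_simps)
    qed (use R x in auto)
  qed
qed

lemma Zmap_rank_one_kraus_eq_scaled_outer:
  assumes M: "Zmap_kraus_moments d n R"
    and R: "\<And>k. k < n \<Longrightarrow> R k \<in> carrier_mat d d \<and> vec_space.rank d (R k) = 1"
  obtains \<kappa> x where "\<And>k. k < n \<Longrightarrow> x k \<in> carrier_vec d \<and> vnorm2 (x k) = 1 \<and> R k = \<kappa> k \<cdot>\<^sub>m outer (x k)"
proof -
  have "\<exists>u g i. i < d \<and> u i \<noteq> 0 \<and> (\<forall>a<d. \<forall>c<d. R k $$ (a,c) = u a * g c)" if "k < n" for k
    using R[OF that] vec_space.rank_eq_1_imp_product_entries by metis
  then obtain u g i where ugi: "\<And>k. k < n \<Longrightarrow> i k < d \<and> u k (i k) \<noteq> 0 \<and>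
      (\<forall>a<d. \<forall>c<d. R k $$ (a,c) = u k a * g k c)"
    by metis
  have "\<exists>\<kappa> x. x \<in> carrier_vec d \<and> vnorm2 x = 1 \<and> R k = \<kappa> \<cdot>\<^sub>m outer x" if k: "k < n" for k
  proof -
    have "u k a * cnj (g k e) = u k e * cnj (g k a)" if "a < d" "e < d" for a e
      using Zmap_kraus_moments_product_hermitian[OF M _ k that] ugi by blast
    then show ?thesis
      using hermitian_product_eq_scaled_outer[of "R k" d "i k" "u k" "g k"] R[OF k] ugi[OF k] by metis
  qed
  then show thesis using that by metis
qed

section \<open>Both minima coincide\<close>

lemma weighted_proj_2design_if_Zmap_eb_decomp:
  assumes d: "d \<ge> 1" and E: "eb_decomp d d (Zmap d) n R"
  shows "\<exists>x. weighted_proj_2design d n x"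
proof -
  have R: "\<And>k. k < n \<Longrightarrow> R k \<in> carrier_mat d d \<and> vec_space.rank d (R k) = 1"
    and M: "Zmap_kraus_moments d n R"
    using E unfolding eb_decomp_Zmap_iff by auto
  obtain \<kappa> x where x: "\<And>k. k < n \<Longrightarrow> x k \<in> carrier_vec d \<and> vnorm2 (x k) = 1 \<and> R k = \<kappa> k \<cdot>\<^sub>m outer (x k)"
    using Zmap_rank_one_kraus_eq_scaled_outer[OF M R] by blast
  define w where "w k = (cmod (\<kappa> k))\<^sup>2 / real d" for k
  have D: "design_moments d n x w"
    using M Zmap_kraus_moments_scaled_outer_iff[of n x d R \<kappa> w] x by (simp add: w_def)
  moreover have "(\<Sum>k<n. w k) = 1" using design_moments_weight_sum[OF d] x D by blast
  moreover have "\<forall>k<n. w k \<ge> 0" by (simp add: w_def)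
  ultimately have "weighted_proj_2design d n x"
    unfolding weighted_proj_2design_iff_moments using x by blast
  then show ?thesis by blast
qed

lemma Zmap_eb_decomp_if_weighted_proj_2design:
  assumes d: "d \<ge> 1" and W: "weighted_proj_2design d n x"
  shows "\<exists>m\<le>n. \<exists>R. eb_decomp d d (Zmap d) m R"
proof -
  obtain w where x: "\<And>k. k < n \<Longrightarrow> x k \<in> carrier_vec d \<and> vnorm2 (x k) = 1"
    and w0: "\<And>k. k < n \<Longrightarrow> w k \<ge> 0" and D: "design_moments d n x w"
    using W unfolding weighted_proj_2design_iff_moments by blast
  (* Points of weight 0 are dropped: they would give Kraus operators of rank 0. *)
  define S where "S = {k \<in> {..<n}. w k \<noteq> 0}"
  define m where "m = card S"
  have S: "S \<subseteq> {..<n}" by (auto simp: S_def)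
  then have "m \<le> n" unfolding m_def using card_mono[OF finite_lessThan S] by simp
  obtain h where h: "bij_betw h {..<m} S"
    using ex_bij_betw_nat_finite[OF finite_subset[OF S finite_lessThan]]
    unfolding m_def lessThan_atLeast0 by blast
  have hS: "h j < n \<and> w (h j) > 0" if "j < m" for j
    using bij_betwE[OF h] that w0 by (force simp: S_def)
  define \<kappa> where "\<kappa> j = complex_of_real (sqrt (real d * w (h j)))" for j
  define R where "R j = \<kappa> j \<cdot>\<^sub>m outer (x (h j))" for j
  have "design_moments d m (\<lambda>j. x (h j)) (\<lambda>j. w (h j))"
    by (rule design_moments_restrict_support[OF h S _ D]) (simp add: S_def)
  moreover have "w (h j) = (cmod (\<kappa> j))\<^sup>2 / real d" if "j < m" for j
    using hS[OF that] d by (simp add: \<kappa>_def)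
  ultimately have "Zmap_kraus_moments d m R"
    using Zmap_kraus_moments_scaled_outer_iff[of m "\<lambda>j. x (h j)" d R \<kappa> "\<lambda>j. w (h j)"] x hS
    by (simp add: R_def)
  moreover have "R j \<in> carrier_mat d d \<and> vec_space.rank d (R j) = 1" if "j < m" for j
    using x[OF conjunct1[OF hS[OF that]]] hS[OF that] d
    by (auto simp: R_def \<kappa>_def rank_scaled_outer)
  ultimately show ?thesis using \<open>m \<le> n\<close> unfolding eb_decomp_Zmap_iff by blast
qed

lemma Least_eq_Least_if_dominated:
  fixes P Q :: "'a::wellorder \<Rightarrow> bool"
  assumes QP: "\<And>n. Q n \<Longrightarrow> P n" and PQ: "\<And>n. P n \<Longrightarrow> \<exists>m\<le>n. Q m"
  shows "(LEAST n. P n) = (LEAST n. Q n)"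
proof (cases "\<exists>n. Q n")
  case True
  then have "Q (LEAST n. Q n)" by (rule LeastI_ex)
  then have le: "(LEAST n. P n) \<le> (LEAST n. Q n)" using QP by (blast intro: Least_le)
  have "P (LEAST n. P n)" using True QP by (blast intro: LeastI)
  then obtain m where "m \<le> (LEAST n. P n)" "Q m" using PQ by blast
  then have "(LEAST n. Q n) \<le> (LEAST n. P n)" by (blast intro: Least_le order_trans)
  with le show ?thesis by (rule antisym)
next
  case False
  then have "P = Q" using PQ by (auto intro!: ext)
  then show ?thesis by simp
qed

theorem theorem1:
  fixes d :: nat
  assumes "d \<ge> 1"
  shows "(LEAST n. \<exists>x. weighted_proj_2design d n x) = ebr d d (Zmap d)"
  unfolding ebr_def
  using weighted_proj_2design_if_Zmap_eb_decomp Zmap_eb_decomp_if_weighted_proj_2design assms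
  by (intro Least_eq_Least_if_dominated) blast+

end
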